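(* Let $G$ be a nonempty $L^0$-convex subset of $L^0$ (with the topology of convergence in probability). If $G$ is $L^0$-convexly compact, then $G$ is almost surely bounded (there is $\xi\in L^0_+$ with $|g|\le\xi$ for all $g\in G$) and closed.
   Context: $(\Omega,\mathcal{F},P)$ is a probability space; $L^0$ denotes the set of equivalence classes (modulo $P$-a.s. equality) of real-valued $\mathcal{F}$-measurable random variables, endowed with the topology of convergence in probability and the a.s. partial order; $L^0_+=\{\xi\in L^0:\xi\ge0\}$. A subset $G\subset L^0$ is $L^0$-convex if $\xi x+(1-\xi)y\in G$ for all $x,y\in G$ and all $\xi\in L^0$ with $0\le\xi\le1$. An $L^0$-convex set $G$ is $L^0$-convexly compact if every family of $L^0$-convex subsets of $G$ which are closed (in the relative topology of $G$) and which has the finite intersection property has nonempty intersection. *)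

theory Defs
  imports "HOL-Probability.Probability"
begin

text \<open>Elements of L^0 are represented by real-valued measurable functions (representatives);
  a set of equivalence classes corresponds to a set of representatives that is saturated
  under almost-sure equality.\<close>

definition L0_saturated :: "'a measure \<Rightarrow> ('a \<Rightarrow> real) set \<Rightarrow> bool" where
  "L0_saturated M G \<longleftrightarrow> G \<subseteq> borel_measurable M \<and>
     (\<forall>f\<in>G. \<forall>g\<in>borel_measurable M. (AE x in M. f x = g x) \<longrightarrow> g \<in> G)"

definition L0_top :: "'a measure \<Rightarrow> ('a \<Rightarrow> real) topology" where
  "L0_top M = topology (\<lambda>U. U \<subseteq> borel_measurable M \<and>
     (\<forall>f\<in>U. \<exists>e>0. \<exists>d>0. \<forall>g\<in>borel_measurable M.
        measure M {x\<in>space M. e < \<bar>f x - g x\<bar>} < d \<longrightarrow> g \<in> U))"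

definition L0_convex :: "'a measure \<Rightarrow> ('a \<Rightarrow> real) set \<Rightarrow> bool" where
  "L0_convex M G \<longleftrightarrow> (\<forall>x\<in>G. \<forall>y\<in>G. \<forall>\<xi>\<in>borel_measurable M.
     (AE w in M. 0 \<le> \<xi> w \<and> \<xi> w \<le> 1) \<longrightarrow>
     (\<lambda>w. \<xi> w * x w + (1 - \<xi> w) * y w) \<in> G)"

definition L0_convexly_compact :: "'a measure \<Rightarrow> ('a \<Rightarrow> real) set \<Rightarrow> bool" where
  "L0_convexly_compact M G \<longleftrightarrow> L0_convex M G \<and>
     (\<forall>\<F>. (\<forall>C\<in>\<F>. C \<subseteq> G \<and> L0_convex M C \<and> closedin (subtopology (L0_top M) G) C) \<longrightarrow>
          (\<forall>\<G>. \<G> \<subseteq> \<F> \<and> finite \<G> \<and> \<G> \<noteq> {} \<longrightarrow> \<Inter>\<G> \<noteq> {}) \<longrightarrow>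
          \<Inter>\<F> \<noteq> {})"

end

theory Submission
  imports Defs
begin

text \<open>An L^0-convex set is stable under pasting two of its elements along a measurable set, so
  it is directed for the almost-sure order. The L^0-halfspaces of all functions a.s. above a given
  element of G are closed and L^0-convex, and any finitely many of them meet G; convex compactness
  thus yields an element of G a.s. above all of G, and symmetrically one a.s. below all of G.

  For closedness, let f be in the closure of G and pick g_n in G with
  P(|f - g_n| > 2^-n) < 2^-n. By Borel-Cantelli almost every point lies in some A_n, the set
  where |f - g_m| <= 2^-m for all m >= n. The closed L^0-convex sets of functions within 2^-n of f
  a.s. on A_n contain every g_m with m >= n, so they have a common point u in G, and u = f a.s.
  puts f into the saturated set G.\<close>

definition L0_nbhd :: "'a measure \<Rightarrow> ('a \<Rightarrow> real) \<Rightarrow> real \<Rightarrow> real \<Rightarrow> ('a \<Rightarrow> real) set" where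
  "L0_nbhd M f e d = {g \<in> borel_measurable M. measure M {x\<in>space M. e < \<bar>f x - g x\<bar>} < d}"

text \<open>With c = 1 this bounds g from below by \<phi> on A, with c = -1 from above by -\<phi>.\<close>

definition L0_halfspace :: "'a measure \<Rightarrow> 'a set \<Rightarrow> ('a \<Rightarrow> real) \<Rightarrow> real \<Rightarrow> ('a \<Rightarrow> real) set" where
  "L0_halfspace M A \<phi> c = {g \<in> borel_measurable M. AE x in M. x \<in> A \<longrightarrow> \<phi> x \<le> c * g x}"

lemma L0_convex_Int: "L0_convex M A \<Longrightarrow> L0_convex M B \<Longrightarrow> L0_convex M (A \<inter> B)"
  unfolding L0_convex_def by blast

lemma L0_convex_if:
  assumes "L0_convex M G" "g \<in> G" "h \<in> G" "Measurable.pred M P"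
  shows "(\<lambda>x. if P x then g x else h x) \<in> G"
proof -
  let ?\<xi> = "\<lambda>x. if P x then 1 else 0 :: real"
  have "?\<xi> \<in> borel_measurable M" using assms(4) by measurable
  then have "(\<lambda>x. ?\<xi> x * g x + (1 - ?\<xi> x) * h x) \<in> G"
    using assms(1-3) unfolding L0_convex_def by simp
  also have "(\<lambda>x. ?\<xi> x * g x + (1 - ?\<xi> x) * h x) = (\<lambda>x. if P x then g x else h x)"
    by auto
  finally show ?thesis .
qed

lemma L0_convex_finite_upper_bound:
  assumes "L0_convex M G" "G \<subseteq> borel_measurable M" "G \<noteq> {}" "finite F" "F \<subseteq> G"
  shows "\<exists>m\<in>G. \<forall>g\<in>F. \<forall>x. c * g x \<le> c * m x"
  using assms(4,5)
proof (induction F rule: finite_induct)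
  case empty
  then show ?case using assms(3) by blast
next
  case (insert g F)
  then obtain m where m: "m \<in> G" "\<forall>f\<in>F. \<forall>x. c * f x \<le> c * m x" by blast
  have [measurable]: "g \<in> borel_measurable M" "m \<in> borel_measurable M"
    using insert.prems m(1) assms(2) by auto
  let ?m = "\<lambda>x. if c * g x \<le> c * m x then m x else g x"
  have "c * ?m x = max (c * g x) (c * m x)" for x
    by (simp only: if_distrib[of "(*) c"] max_def)
  then have above: "c * m x \<le> c * ?m x" "c * g x \<le> c * ?m x" for x
    by simp_all
  have "g \<in> G" using insert.prems by blast
  moreover have "Measurable.pred M (\<lambda>x. c * g x \<le> c * m x)" by measurable
  ultimately have "?m \<in> G" by (rule L0_convex_if[OF assms(1) m(1)])
  moreover have bound: "c * f x \<le> c * ?m x" if f: "f \<in> insert g F" for f x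
  proof -
    consider "f = g" | "f \<in> F" using f by blast
    then show ?thesis
    proof cases
      case 2
      show ?thesis by (rule order_trans[OF m(2)[rule_format, OF 2] above(1)])
    qed (simp only: above(2))
  qed
  ultimately show ?case by (intro bexI[of _ ?m] ballI allI bound)
qed

lemma L0_convex_halfspace: "L0_convex M (L0_halfspace M A \<phi> c)"
  unfolding L0_convex_def
proof (intro ballI impI)
  fix g h \<xi> :: "'a \<Rightarrow> real"
  assume "g \<in> L0_halfspace M A \<phi> c" "h \<in> L0_halfspace M A \<phi> c"
    and [measurable]: "\<xi> \<in> borel_measurable M" and "AE x in M. 0 \<le> \<xi> x \<and> \<xi> x \<le> 1"
  then have [measurable]: "g \<in> borel_measurable M" "h \<in> borel_measurable M"
    and ae: "AE x in M. (x \<in> A \<longrightarrow> \<phi> x \<le> c * g x) \<and> (x \<in> A \<longrightarrow> \<phi> x \<le> c * h x) \<and> 0 \<le> \<xi> x \<and> \<xi> x \<le> 1"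
    by (simp_all add: L0_halfspace_def AE_conj_iff)
  from ae have "AE x in M. x \<in> A \<longrightarrow> \<phi> x \<le> c * (\<xi> x * g x + (1 - \<xi> x) * h x)"
  proof (rule eventually_mono, intro impI)
    fix x assume x: "(x \<in> A \<longrightarrow> \<phi> x \<le> c * g x) \<and> (x \<in> A \<longrightarrow> \<phi> x \<le> c * h x) \<and> 0 \<le> \<xi> x \<and> \<xi> x \<le> 1"
      and "x \<in> A"
    then have "\<xi> x * \<phi> x + (1 - \<xi> x) * \<phi> x \<le> \<xi> x * (c * g x) + (1 - \<xi> x) * (c * h x)"
      by (intro add_mono mult_left_mono) simp_all
    then show "\<phi> x \<le> c * (\<xi> x * g x + (1 - \<xi> x) * h x)"
      by (simp add: algebra_simps)
  qed
  then show "(\<lambda>x. \<xi> x * g x + (1 - \<xi> x) * h x) \<in> L0_halfspace M A \<phi> c"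
    by (simp add: L0_halfspace_def)
qed

lemma L0_convexly_compactD:
  assumes cc: "L0_convexly_compact M G"
    and closed: "\<And>i. i \<in> I \<Longrightarrow> closedin (L0_top M) (D i)"
    and convex: "\<And>i. i \<in> I \<Longrightarrow> L0_convex M (D i)"
    and fip: "\<And>J. finite J \<Longrightarrow> J \<subseteq> I \<Longrightarrow> \<exists>g\<in>G. \<forall>i\<in>J. g \<in> D i"
  shows "\<exists>u\<in>G. \<forall>i\<in>I. u \<in> D i"
proof (cases "I = {}")
  case True
  then show ?thesis using fip[of "{}"] by simp
next
  case False
  let ?\<F> = "(\<lambda>i. G \<inter> D i) ` I"
  have "L0_convex M G" using cc by (simp add: L0_convexly_compact_def)
  then have "C \<subseteq> G \<and> L0_convex M C \<and> closedin (subtopology (L0_top M) G) C" if "C \<in> ?\<F>" for C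
    using that closed convex by (auto intro: L0_convex_Int closedin_subtopology_Int_closed)
  moreover have "\<Inter>\<G> \<noteq> {}" if "\<G> \<subseteq> ?\<F>" "finite \<G>" for \<G>
  proof -
    obtain J where "J \<subseteq> I" "finite J" "\<G> = (\<lambda>i. G \<inter> D i) ` J"
      using finite_subset_image[OF \<open>finite \<G>\<close> \<open>\<G> \<subseteq> ?\<F>\<close>] by blast
    then show ?thesis using fip[of J] by blast
  qed
  ultimately have "\<Inter>?\<F> \<noteq> {}"
    using cc unfolding L0_convexly_compact_def by (metis (no_types, lifting))
  then show ?thesis using False by blast
qed

context finite_measure
begin

lemma L0_nbhd_mono:
  assumes "e' \<le> e" "d' \<le> d" "f \<in> borel_measurable M"
  shows "L0_nbhd M f e' d' \<subseteq> L0_nbhd M f e d"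
proof
  fix g assume g: "g \<in> L0_nbhd M f e' d'"
  then have [measurable]: "g \<in> borel_measurable M" by (simp add: L0_nbhd_def)
  have "measure M {x\<in>space M. e < \<bar>f x - g x\<bar>} \<le> measure M {x\<in>space M. e' < \<bar>f x - g x\<bar>}"
    using assms by (intro finite_measure_mono) auto
  then show "g \<in> L0_nbhd M f e d" using g assms by (auto simp: L0_nbhd_def)
qed

lemma istopology_L0_open:
  "istopology (\<lambda>U. U \<subseteq> borel_measurable M \<and> (\<forall>f\<in>U. \<exists>e>0. \<exists>d>0. L0_nbhd M f e d \<subseteq> U))"
  (is "istopology ?open")
  unfolding istopology_def
proof (rule conjI; intro allI impI)
  fix S T assume S: "?open S" and T: "?open T"
  show "?open (S \<inter> T)"
  proof (intro conjI ballI)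
    show "S \<inter> T \<subseteq> borel_measurable M" using S by blast
    fix f assume f: "f \<in> S \<inter> T"
    then have "f \<in> borel_measurable M" using S by blast
    obtain e1 d1 where "e1 > 0" "d1 > 0" "L0_nbhd M f e1 d1 \<subseteq> S"
      using S f by blast
    moreover obtain e2 d2 where "e2 > 0" "d2 > 0" "L0_nbhd M f e2 d2 \<subseteq> T"
      using T f by blast
    ultimately show "\<exists>e>0. \<exists>d>0. L0_nbhd M f e d \<subseteq> S \<inter> T"
      using L0_nbhd_mono[of "min e1 e2" e1 "min d1 d2" d1 f]
        L0_nbhd_mono[of "min e1 e2" e2 "min d1 d2" d2 f] \<open>f \<in> borel_measurable M\<close>
      by (intro exI[of _ "min e1 e2"] exI[of _ "min d1 d2"] conjI) auto
  qed
next
  fix K assume K: "\<forall>U\<in>K. ?open U"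
  show "?open (\<Union>K)"
  proof (intro conjI ballI)
    show "\<Union>K \<subseteq> borel_measurable M" using K by blast
    fix f assume "f \<in> \<Union>K"
    then obtain U where "U \<in> K" "f \<in> U" by blast
    with K show "\<exists>e>0. \<exists>d>0. L0_nbhd M f e d \<subseteq> \<Union>K" by (meson Union_upper subset_trans)
  qed
qed

lemma openin_L0:
  "openin (L0_top M) U \<longleftrightarrow> U \<subseteq> borel_measurable M \<and> (\<forall>f\<in>U. \<exists>e>0. \<exists>d>0. L0_nbhd M f e d \<subseteq> U)"
proof -
  have "L0_top M = topology (\<lambda>U. U \<subseteq> borel_measurable M \<and> (\<forall>f\<in>U. \<exists>e>0. \<exists>d>0. L0_nbhd M f e d \<subseteq> U))"
    unfolding L0_top_def L0_nbhd_def by (simp only: subset_iff mem_Collect_eq imp_conjL Ball_def)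
  then show ?thesis using istopology_L0_open by simp
qed

lemma topspace_L0: "topspace (L0_top M) = borel_measurable M"
proof
  show "topspace (L0_top M) \<subseteq> borel_measurable M"
    using openin_L0 openin_topspace by blast
  have "openin (L0_top M) (borel_measurable M)"
    unfolding openin_L0 L0_nbhd_def by (intro conjI ballI exI[of _ 1]) auto
  then show "borel_measurable M \<subseteq> topspace (L0_top M)" by (rule openin_subset)
qed

lemma closedin_L0:
  "closedin (L0_top M) S \<longleftrightarrow> S \<subseteq> borel_measurable M \<and>
     (\<forall>f\<in>borel_measurable M - S. \<exists>e>0. \<exists>d>0. L0_nbhd M f e d \<inter> S = {})"
proof -
  have "L0_nbhd M f e d \<subseteq> borel_measurable M - S \<longleftrightarrow> L0_nbhd M f e d \<inter> S = {}" for f e d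
    by (auto simp: L0_nbhd_def)
  then show ?thesis unfolding closedin_def topspace_L0 openin_L0 by simp
qed

lemma not_AE_le_imp_pos_gap:
  fixes \<phi> \<psi> :: "'a \<Rightarrow> real"
  assumes [measurable]: "A \<in> sets M" "\<phi> \<in> borel_measurable M" "\<psi> \<in> borel_measurable M"
    and not_le: "\<not> (AE x in M. x \<in> A \<longrightarrow> \<phi> x \<le> \<psi> x)"
  shows "\<exists>e>0. 0 < measure M {x\<in>space M. x \<in> A \<and> \<psi> x + e < \<phi> x}"
proof (rule ccontr)
  define E where "E k = {x\<in>space M. x \<in> A \<and> \<psi> x + inverse (real (Suc k)) < \<phi> x}" for k :: nat
  have [measurable]: "E k \<in> sets M" for k unfolding E_def by measurable
  assume contra: "\<not> ?thesis"
  have "measure M (E k) = 0" for k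
  proof -
    have "0 < inverse (real (Suc k))" by simp
    then have "\<not> 0 < measure M (E k)" using contra unfolding E_def by blast
    then show ?thesis using measure_nonneg[of M "E k"] by linarith
  qed
  then have "emeasure M (\<Union>k. E k) = 0"
    by (intro emeasure_UN_eq_0) (auto simp: emeasure_eq_measure)
  moreover have "{x\<in>space M. \<not> (x \<in> A \<longrightarrow> \<phi> x \<le> \<psi> x)} = (\<Union>k. E k)"
  proof (intro equalityI subsetI)
    fix x assume x: "x \<in> {x\<in>space M. \<not> (x \<in> A \<longrightarrow> \<phi> x \<le> \<psi> x)}"
    then obtain k where "inverse (real (Suc k)) < \<phi> x - \<psi> x"
      using reals_Archimedean[of "\<phi> x - \<psi> x"] by auto
    then have "x \<in> E k" using x by (simp add: E_def)
    then show "x \<in> (\<Union>k. E k)" by blast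
  next
    fix x assume "x \<in> (\<Union>k. E k)"
    then obtain k where "x \<in> E k" by blast
    then have x: "x \<in> space M" "x \<in> A" and "\<psi> x + inverse (real (Suc k)) < \<phi> x"
      unfolding E_def by blast+
    moreover have "0 < inverse (real (Suc k))" by simp
    ultimately have "\<not> \<phi> x \<le> \<psi> x" by linarith
    with x show "x \<in> {x\<in>space M. \<not> (x \<in> A \<longrightarrow> \<phi> x \<le> \<psi> x)}" by simp
  qed
  ultimately have "AE x in M. x \<in> A \<longrightarrow> \<phi> x \<le> \<psi> x"
    by (subst AE_iff_measurable) auto
  with not_le show False ..
qed

lemma closedin_L0_halfspace:
  assumes [measurable]: "A \<in> sets M" "\<phi> \<in> borel_measurable M" and c: "\<bar>c\<bar> = 1"
  shows "closedin (L0_top M) (L0_halfspace M A \<phi> c)"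
  unfolding closedin_L0
proof (intro conjI ballI)
  show "L0_halfspace M A \<phi> c \<subseteq> borel_measurable M" by (auto simp: L0_halfspace_def)
  fix h assume "h \<in> borel_measurable M - L0_halfspace M A \<phi> c"
  then have [measurable]: "h \<in> borel_measurable M"
    and "\<not> (AE x in M. x \<in> A \<longrightarrow> \<phi> x \<le> c * h x)"
    by (auto simp: L0_halfspace_def)
  then obtain e where "e > 0" and E: "0 < measure M {x\<in>space M. x \<in> A \<and> c * h x + e < \<phi> x}"
    (is "0 < measure M ?E")
    using not_AE_le_imp_pos_gap[of A \<phi> "\<lambda>x. c * h x"] by auto
  have "g \<notin> L0_halfspace M A \<phi> c" if g: "g \<in> L0_nbhd M h e (measure M ?E)" for g
  proof
    assume "g \<in> L0_halfspace M A \<phi> c"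
    then have [measurable]: "g \<in> borel_measurable M"
      and g_above: "AE x in M. x \<in> A \<longrightarrow> \<phi> x \<le> c * g x"
      by (auto simp: L0_halfspace_def)
    from g_above have "AE x in M. x \<in> ?E \<longrightarrow> x \<in> {x\<in>space M. e < \<bar>h x - g x\<bar>}"
    proof (rule eventually_mono, intro impI)
      fix x assume "x \<in> A \<longrightarrow> \<phi> x \<le> c * g x" "x \<in> ?E"
      then have "e < c * (g x - h x)" by (simp add: algebra_simps)
      also have "\<dots> \<le> \<bar>h x - g x\<bar>"
        using abs_ge_self[of "c * (g x - h x)"] c by (simp add: abs_mult abs_minus_commute)
      finally show "x \<in> {x\<in>space M. e < \<bar>h x - g x\<bar>}" using \<open>x \<in> ?E\<close> by simp
    qed
    then have "measure M ?E \<le> measure M {x\<in>space M. e < \<bar>h x - g x\<bar>}"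
      by (rule finite_measure_mono_AE) measurable
    with g show False by (simp add: L0_nbhd_def)
  qed
  then show "\<exists>e>0. \<exists>d>0. L0_nbhd M h e d \<inter> L0_halfspace M A \<phi> c = {}"
    using \<open>e > 0\<close> E by blast
qed

lemma L0_convexly_compact_ess_max:
  assumes G: "G \<subseteq> borel_measurable M" "G \<noteq> {}" and cc: "L0_convexly_compact M G"
    and c: "\<bar>c\<bar> = 1"
  shows "\<exists>u\<in>G. \<forall>g\<in>G. AE x in M. c * g x \<le> c * u x"
proof -
  let ?D = "\<lambda>g. L0_halfspace M (space M) (\<lambda>x. c * g x) c"
  have "\<exists>u\<in>G. \<forall>g\<in>G. u \<in> ?D g"
  proof (rule L0_convexly_compactD[OF cc])
    show "closedin (L0_top M) (?D g)" if "g \<in> G" for g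
      using that G(1) c by (intro closedin_L0_halfspace) auto
    show "L0_convex M (?D g)" for g by (rule L0_convex_halfspace)
    fix J assume "finite J" "J \<subseteq> G"
    moreover have "L0_convex M G" using cc by (simp add: L0_convexly_compact_def)
    ultimately obtain m where "m \<in> G" "\<forall>g\<in>J. \<forall>x. c * g x \<le> c * m x"
      using L0_convex_finite_upper_bound[of M G J c] G by blast
    then show "\<exists>m\<in>G. \<forall>g\<in>J. m \<in> ?D g" using G(1) by (auto simp: L0_halfspace_def)
  qed
  then show ?thesis by (auto simp: L0_halfspace_def)
qed

lemma L0_convexly_compact_AE_bounded:
  assumes "G \<subseteq> borel_measurable M" "G \<noteq> {}" "L0_convexly_compact M G"
  shows "\<exists>\<xi>\<in>borel_measurable M. (\<forall>w. 0 \<le> \<xi> w) \<and> (\<forall>g\<in>G. AE w in M. \<bar>g w\<bar> \<le> \<xi> w)"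
proof -
  obtain u where u: "u \<in> G" "\<forall>g\<in>G. AE x in M. 1 * g x \<le> 1 * u x"
    using L0_convexly_compact_ess_max[OF assms, of 1] by auto
  obtain l where l: "l \<in> G" "\<forall>g\<in>G. AE x in M. -1 * g x \<le> -1 * l x"
    using L0_convexly_compact_ess_max[OF assms, of "-1"] by auto
  have [measurable]: "u \<in> borel_measurable M" "l \<in> borel_measurable M"
    using u(1) l(1) assms(1) by auto
  have "AE x in M. \<bar>g x\<bar> \<le> \<bar>u x\<bar> + \<bar>l x\<bar>" if "g \<in> G" for g
    using u(2)[rule_format, OF that] l(2)[rule_format, OF that] by eventually_elim auto
  then show ?thesis by (intro bexI[of _ "\<lambda>x. \<bar>u x\<bar> + \<bar>l x\<bar>"] conjI allI ballI) auto
qed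

lemma L0_convexly_compact_AE_limit:
  assumes G: "G \<subseteq> borel_measurable M" and cc: "L0_convexly_compact M G"
    and [measurable]: "f \<in> borel_measurable M" and gs: "\<And>n. gs n \<in> G"
    and r: "decseq r" "r \<longlonglongrightarrow> 0"
    and summable: "summable (\<lambda>n. measure M {x\<in>space M. r n < \<bar>f x - gs n x\<bar>})"
  shows "\<exists>u\<in>G. AE x in M. u x = f x"
proof -
  define B where "B n = {x\<in>space M. r n < \<bar>f x - gs n x\<bar>}" for n
  define A where "A n = space M - (\<Union>m\<in>{n..}. B m)" for n
  have [measurable]: "gs n \<in> borel_measurable M" for n using gs G by blast
  have [measurable]: "B n \<in> sets M" "A n \<in> sets M" for n
    unfolding A_def B_def by measurable
  have close: "\<bar>gs m x - f x\<bar> \<le> r n" if "x \<in> A n" "n \<le> m" for x n m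
  proof -
    have "x \<notin> B m" using that by (auto simp: A_def)
    then have "\<bar>gs m x - f x\<bar> \<le> r m" using that(1) by (auto simp: A_def B_def abs_minus_commute)
    also have "\<dots> \<le> r n" using r(1) that(2) by (rule decseqD)
    finally show ?thesis .
  qed
  define D where "D n = L0_halfspace M (A n) (\<lambda>x. f x - r n) 1 \<inter>
      L0_halfspace M (A n) (\<lambda>x. - f x - r n) (-1)" for n
  have mem_D: "g \<in> D n \<longleftrightarrow> g \<in> borel_measurable M \<and> (AE x in M. x \<in> A n \<longrightarrow> \<bar>g x - f x\<bar> \<le> r n)"
    for g n
  proof -
    have pointwise: "(x \<in> A n \<longrightarrow> f x - r n \<le> 1 * g x) \<and> (x \<in> A n \<longrightarrow> - f x - r n \<le> -1 * g x)
        \<longleftrightarrow> (x \<in> A n \<longrightarrow> \<bar>g x - f x\<bar> \<le> r n)" for x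
      by (auto simp: abs_le_iff)
    have "g \<in> D n \<longleftrightarrow> g \<in> borel_measurable M \<and> (AE x in M. (x \<in> A n \<longrightarrow> f x - r n \<le> 1 * g x) \<and>
        (x \<in> A n \<longrightarrow> - f x - r n \<le> -1 * g x))"
      by (simp add: D_def L0_halfspace_def) blast
    then show ?thesis by (simp only: pointwise)
  qed
  have "\<exists>u\<in>G. \<forall>n\<in>UNIV. u \<in> D n"
  proof (rule L0_convexly_compactD[OF cc])
    show "closedin (L0_top M) (D n)" for n
      unfolding D_def by (intro closedin_Int closedin_L0_halfspace) auto
    show "L0_convex M (D n)" for n
      unfolding D_def by (intro L0_convex_Int L0_convex_halfspace)
    fix J :: "nat set" assume "finite J"
    then have "gs (Max (insert 0 J)) \<in> D n" if "n \<in> J" for n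
      using that close by (simp add: mem_D)
    then show "\<exists>g\<in>G. \<forall>n\<in>J. g \<in> D n" using gs by blast
  qed
  then obtain u where "u \<in> G" and "\<forall>n. u \<in> D n" by blast
  then have "AE x in M. \<forall>n. x \<in> A n \<longrightarrow> \<bar>u x - f x\<bar> \<le> r n"
    by (simp add: mem_D AE_all_countable)
  moreover have "AE x in M. eventually (\<lambda>n. x \<in> space M - B n) sequentially"
    using summable by (intro borel_cantelli_AE1) (auto simp: B_def less_top[symmetric])
  ultimately have "AE x in M. u x = f x"
  proof eventually_elim
    case (elim x)
    then obtain N where "\<forall>n\<ge>N. x \<in> space M - B n"
      by (auto simp: eventually_sequentially)
    then have "\<forall>n\<ge>N. x \<in> A n" by (auto simp: A_def)
    then have "\<bar>u x - f x\<bar> \<le> 0"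
      using elim(1) by (intro LIMSEQ_le_const[OF r(2)]) blast
    then show ?case by simp
  qed
  with \<open>u \<in> G\<close> show ?thesis by blast
qed

lemma L0_convexly_compact_closedin:
  assumes sat: "L0_saturated M G" and cc: "L0_convexly_compact M G"
  shows "closedin (L0_top M) G"
proof -
  have G: "G \<subseteq> borel_measurable M" using sat by (simp add: L0_saturated_def)
  have "f \<in> G" if f: "f \<in> borel_measurable M"
    and approx: "\<forall>e>0. \<forall>d>0. L0_nbhd M f e d \<inter> G \<noteq> {}" for f
  proof -
    have "\<exists>g. g \<in> G \<and> g \<in> L0_nbhd M f ((1/2)^n) ((1/2)^n)" for n
      using approx[rule_format, of "(1/2)^n" "(1/2)^n"] by auto
    then obtain gs where gs: "\<And>n. gs n \<in> G" "\<And>n. gs n \<in> L0_nbhd M f ((1/2)^n) ((1/2)^n)"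
      by metis
    have summable: "summable (\<lambda>n. measure M {x\<in>space M. (1/2)^n < \<bar>f x - gs n x\<bar>})"
      using gs(2) by (intro summable_comparison_test'[OF summable_geometric[of "1/2"]])
        (auto simp: L0_nbhd_def less_imp_le)
    have decseq: "decseq (\<lambda>n. (1/2::real)^n)"
      by (simp add: decseq_def power_decreasing)
    obtain u where "u \<in> G" "AE x in M. u x = f x"
      using L0_convexly_compact_AE_limit[where gs = gs, OF G cc f gs(1) decseq LIMSEQ_realpow_zero summable]
      by auto
    then show "f \<in> G" using sat f by (auto simp: L0_saturated_def)
  qed
  then show ?thesis unfolding closedin_L0 using G by blast
qed

end

theorem proposition3p2:
  fixes M :: "'a measure" and G :: "('a \<Rightarrow> real) set"
  assumes "prob_space M"
    and "L0_saturated M G"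
    and "G \<noteq> {}"
    and "L0_convex M G"
    and "L0_convexly_compact M G"
  shows "(\<exists>\<xi>\<in>borel_measurable M. (\<forall>w. 0 \<le> \<xi> w) \<and>
            (\<forall>g\<in>G. AE w in M. \<bar>g w\<bar> \<le> \<xi> w))
         \<and> closedin (L0_top M) G"
proof
  interpret prob_space M by fact
  have "G \<subseteq> borel_measurable M" using assms(2) by (simp add: L0_saturated_def)
  then show "\<exists>\<xi>\<in>borel_measurable M. (\<forall>w. 0 \<le> \<xi> w) \<and> (\<forall>g\<in>G. AE w in M. \<bar>g w\<bar> \<le> \<xi> w)"
    using L0_convexly_compact_AE_bounded assms(3,5) by blast
  show "closedin (L0_top M) G" using L0_convexly_compact_closedin assms(2,5) by blast
qed

end
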